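(* Let $X$ and $Y$ be continuous random variables with marginal distribution functions $F_1,F_2$ and copula $C$, and suppose $Y=f(X)$ almost surely, where $f$ is a periodic function, continuous and differentiable over the range of $X$. Let $M(u,v)=\min(u,v)$, $W(u,v)=\max(u+v-1,0)$, $\Pi(u,v)=uv$. Then at every global maximum point $(x_1,y_{\max})$ of $f$, with $u_1=F_1(x_1)$, $v_1=F_2(y_{\max})$, one has $C(u_1,v_1)=M(u_1,v_1)=W(u_1,v_1)=\Pi(u_1,v_1)=u_1$, and at every global minimum point $(x_2,y_{\min})$ of $f$, with $u_2=F_1(x_2)$, $v_2=F_2(y_{\min})$, one has $C(u_2,v_2)=M(u_2,v_2)=W(u_2,v_2)=\Pi(u_2,v_2)=0$.
   Context: The copula $C$ of continuous random variables $X,Y$ with joint distribution $H$ and marginals $F_1,F_2$ is the unique function $C:[0,1]^2\to[0,1]$ with $H(x,y)=P(X\le x,Y\le y)=C(F_1(x),F_2(y))$. *)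

theory Defs
  imports "HOL-Probability.Probability"
begin

definition copula :: "(real \<Rightarrow> real \<Rightarrow> real) \<Rightarrow> bool" where
  "copula C \<longleftrightarrow>
     (\<forall>u\<in>{0..1}. \<forall>v\<in>{0..1}. C u v \<in> {0..1}) \<and>
     (\<forall>u\<in>{0..1}. C u 0 = 0 \<and> C 0 u = 0 \<and> C u 1 = u \<and> C 1 u = u) \<and>
     (\<forall>u1\<in>{0..1}. \<forall>u2\<in>{0..1}. \<forall>v1\<in>{0..1}. \<forall>v2\<in>{0..1}.
        u1 \<le> u2 \<longrightarrow> v1 \<le> v2 \<longrightarrow> C u2 v2 - C u2 v1 - C u1 v2 + C u1 v1 \<ge> 0)"

definition copula_of :: "'a measure \<Rightarrow> ('a \<Rightarrow> real) \<Rightarrow> ('a \<Rightarrow> real) \<Rightarrow> (real \<Rightarrow> real \<Rightarrow> real) \<Rightarrow> bool" where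
  "copula_of M X Y C \<longleftrightarrow> copula C \<and>
     (\<forall>x y. measure M {\<omega> \<in> space M. X \<omega> \<le> x \<and> Y \<omega> \<le> y}
            = C (measure M {\<omega> \<in> space M. X \<omega> \<le> x}) (measure M {\<omega> \<in> space M. Y \<omega> \<le> y}))"

definition cop_M :: "real \<Rightarrow> real \<Rightarrow> real" where "cop_M u v = min u v"
definition cop_W :: "real \<Rightarrow> real \<Rightarrow> real" where "cop_W u v = max (u + v - 1) 0"
definition cop_Pi :: "real \<Rightarrow> real \<Rightarrow> real" where "cop_Pi u v = u * v"

end

theory Submission
  imports Defs
begin

text \<open>Since \<open>Y = f X\<close> almost surely, a global maximum value of \<open>f\<close> bounds \<open>Y\<close> from above
  and a global minimum value bounds it from below. Hence \<open>F\<^sub>2\<close> equals 1 at the maximum value,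
  and, being continuous while vanishing to its left, 0 at the minimum value. All four
  functions \<open>C, M, W, \<Pi>\<close> are copulas, and every copula has \<open>C(u,1) = u\<close> and
  \<open>C(u,0) = 0\<close>.\<close>

lemma copula_boundary:
  assumes "copula C" and "u \<in> {0..1}"
  shows "C u 1 = u" "C u 0 = 0"
  using assms unfolding copula_def by auto

lemma cop_M_boundary: "u \<le> 1 \<Longrightarrow> cop_M u 1 = u" "0 \<le> u \<Longrightarrow> cop_M u 0 = 0"
  by (simp_all add: cop_M_def)

lemma cop_W_boundary: "0 \<le> u \<Longrightarrow> cop_W u 1 = u" "u \<le> 1 \<Longrightarrow> cop_W u 0 = 0"
  by (simp_all add: cop_W_def)

lemma cop_Pi_boundary: "cop_Pi u 1 = u" "cop_Pi u 0 = 0"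
  by (simp_all add: cop_Pi_def)

context prob_space
begin

lemma cdf_eq_1_at_AE_upper_bound:
  fixes Y :: "'a \<Rightarrow> real"
  assumes "Y \<in> borel_measurable M" and "AE \<omega> in M. Y \<omega> \<le> c"
  shows "measure M {\<omega> \<in> space M. Y \<omega> \<le> c} = 1"
proof -
  have "{\<omega> \<in> space M. Y \<omega> \<le> c} \<in> events" using assms(1) by simp
  then show ?thesis using prob_Collect_eq_1 assms(2) by simp
qed

lemma cdf_eq_0_at_AE_lower_bound:
  fixes Y :: "'a \<Rightarrow> real"
  assumes Y: "Y \<in> borel_measurable M" and lower: "AE \<omega> in M. c \<le> Y \<omega>"
    and F_def: "\<And>y. F y = measure M {\<omega> \<in> space M. Y \<omega> \<le> y}"
    and cont: "isCont F c"
  shows "F c = 0"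
proof -
  have below: "F t = 0" if "t < c" for t
  proof -
    have "AE \<omega> in M. \<not> Y \<omega> \<le> t"
      using lower by (rule eventually_mono) (use that in linarith)
    moreover have "{\<omega> \<in> space M. Y \<omega> \<le> t} \<in> events" using Y by simp
    ultimately show ?thesis
      unfolding F_def using prob_Collect_eq_0 by simp
  qed
  have "(F \<longlongrightarrow> F c) (at_left c)"
    using cont by (simp add: isCont_def filterlim_at_split)
  moreover have "(F \<longlongrightarrow> 0) (at_left c)"
    by (rule Lim_transform_eventually[OF tendsto_const])
       (simp add: eventually_at_filter below)
  ultimately show ?thesis
    using tendsto_unique trivial_limit_at_left_real by blast
qed

end

theorem corollary1:
  fixes M :: "'a measure" and X Y :: "'a \<Rightarrow> real" and f :: "real \<Rightarrow> real"
    and C :: "real \<Rightarrow> real \<Rightarrow> real" and F1 F2 :: "real \<Rightarrow> real"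
  assumes "prob_space M"
    and "X \<in> borel_measurable M" and "Y \<in> borel_measurable M"
    and F1_def: "\<And>x. F1 x = measure M {\<omega> \<in> space M. X \<omega> \<le> x}"
    and F2_def: "\<And>y. F2 y = measure M {\<omega> \<in> space M. Y \<omega> \<le> y}"
    and "\<And>x. isCont F1 x" and "\<And>y. isCont F2 y"
    and "copula_of M X Y C"
    and "\<exists>p>0. \<forall>x. f (x + p) = f x"
    and "continuous_on (X ` space M) f" and "f differentiable_on (X ` space M)"
    and "AE \<omega> in M. Y \<omega> = f (X \<omega>)"
  shows "(\<forall>x1. (\<forall>x. f x \<le> f x1) \<longrightarrow>
            (let u1 = F1 x1; v1 = F2 (f x1) in
               C u1 v1 = cop_M u1 v1 \<and> cop_M u1 v1 = cop_W u1 v1 \<and>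
               cop_W u1 v1 = cop_Pi u1 v1 \<and> cop_Pi u1 v1 = u1)) \<and>
         (\<forall>x2. (\<forall>x. f x2 \<le> f x) \<longrightarrow>
            (let u2 = F1 x2; v2 = F2 (f x2) in
               C u2 v2 = cop_M u2 v2 \<and> cop_M u2 v2 = cop_W u2 v2 \<and>
               cop_W u2 v2 = cop_Pi u2 v2 \<and> cop_Pi u2 v2 = 0))"
proof -
  interpret prob_space M by fact
  note Y = \<open>Y \<in> borel_measurable M\<close> and Y_eq = \<open>AE \<omega> in M. Y \<omega> = f (X \<omega>)\<close>
  have cop: "copula C" using \<open>copula_of M X Y C\<close> unfolding copula_of_def by blast
  have F1_unit: "F1 x \<in> {0..1}" for x unfolding F1_def by simp
  show ?thesis
  proof (intro conjI allI impI)
    fix x1 assume "\<forall>x. f x \<le> f x1"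
    with Y_eq have "AE \<omega> in M. Y \<omega> \<le> f x1" by auto
    then have "F2 (f x1) = 1" unfolding F2_def using cdf_eq_1_at_AE_upper_bound Y by blast
    then show "let u1 = F1 x1; v1 = F2 (f x1) in
               C u1 v1 = cop_M u1 v1 \<and> cop_M u1 v1 = cop_W u1 v1 \<and>
               cop_W u1 v1 = cop_Pi u1 v1 \<and> cop_Pi u1 v1 = u1"
      using F1_unit[of x1] cop copula_boundary cop_M_boundary cop_W_boundary
        cop_Pi_boundary by (simp add: Let_def)
  next
    fix x2 assume "\<forall>x. f x2 \<le> f x"
    with Y_eq have "AE \<omega> in M. f x2 \<le> Y \<omega>" by auto
    then have "F2 (f x2) = 0"
      using cdf_eq_0_at_AE_lower_bound Y F2_def \<open>\<And>y. isCont F2 y\<close> by blast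
    then show "let u2 = F1 x2; v2 = F2 (f x2) in
               C u2 v2 = cop_M u2 v2 \<and> cop_M u2 v2 = cop_W u2 v2 \<and>
               cop_W u2 v2 = cop_Pi u2 v2 \<and> cop_Pi u2 v2 = 0"
      using F1_unit[of x2] cop copula_boundary cop_M_boundary cop_W_boundary
        cop_Pi_boundary by (simp add: Let_def)
  qed
qed

end
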